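(* Let $R$ be a commutative ring with nonzero identity, $\delta$ an expansion of ideals of $R$, and $I$ a proper ideal of $R$ with $\delta(\delta(I))=\delta(I)$ (for instance $\delta=\delta_1$, $\delta_1(J)=\sqrt{J}$). Then: (1) If $I$ is a $\delta$-$n$-ideal and $a\notin\sqrt{0}$, then $\delta((I:a))=\delta(I)$. (2) $\delta(I)$ is an $n$-ideal if and only if $\delta(I)$ is a $\delta$-$n$-ideal. (3) If $J$ is an ideal of $R$ and $K$ an ideal of $R$ with $IK=JK$, where $I,J$ are $\delta$-$n$-ideals of $R$, $\delta(\delta(J))=\delta(J)$ and $K\cap(R\setminus\sqrt{0})\neq\emptyset$, then $\delta(I)=\delta(J)$. (4) If $K$ is an ideal of $R$ such that $IK$ and $I$ are $\delta$-$n$-ideals of $R$, $\delta(\delta(IK))=\delta(IK)$ and $K\cap(R\setminus\sqrt{0})\neq\emptyset$, then $\delta(IK)=\delta(I)$.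
   Context: An expansion of ideals of a ring $R$ is a map $\delta$ from the set of ideals of $R$ to itself such that $I\subseteq\delta(I)$ for every ideal $I$, and $\delta(I)\subseteq\delta(J)$ whenever $I\subseteq J$. $\sqrt{0}$ denotes the nilradical of $R$ and $(I:a)=\{r\in R: ra\in I\}$. Given an expansion $\delta$, a proper ideal $I$ of $R$ is a $\delta$-$n$-ideal if whenever $a,b\in R$ with $ab\in I$ and $a\notin\sqrt{0}$, then $b\in\delta(I)$. An $n$-ideal is a proper ideal $I$ such that $ab\in I$ and $a\notin\sqrt{0}$ imply $b\in I$. *)

theory Defs
  imports "HOL-Algebra.Ideal_Product"
begin

definition nilrad :: "('a, 'b) ring_scheme \<Rightarrow> 'a set" where
  "nilrad R = {a \<in> carrier R. \<exists>n::nat. a [^]\<^bsub>R\<^esub> n = \<zero>\<^bsub>R\<^esub>}"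

definition colon :: "('a, 'b) ring_scheme \<Rightarrow> 'a set \<Rightarrow> 'a \<Rightarrow> 'a set" where
  "colon R I a = {r \<in> carrier R. r \<otimes>\<^bsub>R\<^esub> a \<in> I}"

definition expansion :: "('a, 'b) ring_scheme \<Rightarrow> ('a set \<Rightarrow> 'a set) \<Rightarrow> bool" where
  "expansion R \<delta> \<longleftrightarrow>
     (\<forall>I. ideal I R \<longrightarrow> ideal (\<delta> I) R \<and> I \<subseteq> \<delta> I) \<and>
     (\<forall>I J. ideal I R \<longrightarrow> ideal J R \<longrightarrow> I \<subseteq> J \<longrightarrow> \<delta> I \<subseteq> \<delta> J)"

definition delta_n_ideal :: "('a, 'b) ring_scheme \<Rightarrow> ('a set \<Rightarrow> 'a set) \<Rightarrow> 'a set \<Rightarrow> bool" where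
  "delta_n_ideal R \<delta> I \<longleftrightarrow> ideal I R \<and> I \<noteq> carrier R \<and>
     (\<forall>a \<in> carrier R. \<forall>b \<in> carrier R.
        a \<otimes>\<^bsub>R\<^esub> b \<in> I \<longrightarrow> a \<notin> nilrad R \<longrightarrow> b \<in> \<delta> I)"

definition n_ideal :: "('a, 'b) ring_scheme \<Rightarrow> 'a set \<Rightarrow> bool" where
  "n_ideal R I \<longleftrightarrow> ideal I R \<and> I \<noteq> carrier R \<and>
     (\<forall>a \<in> carrier R. \<forall>b \<in> carrier R.
        a \<otimes>\<^bsub>R\<^esub> b \<in> I \<longrightarrow> a \<notin> nilrad R \<longrightarrow> b \<in> I)"

end

theory Submission
  imports Defs
begin

text \<open>If \<open>X K \<subseteq> Y\<close> for a \<open>\<delta>\<close>-\<open>n\<close>-ideal \<open>Y\<close> and \<open>K\<close> contains a non-nilpotent \<open>k\<close>,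
  then \<open>k x \<in> Y\<close> forces \<open>x \<in> \<delta>(Y)\<close> for every \<open>x \<in> X\<close>, so \<open>X \<subseteq> \<delta>(Y)\<close>, and monotonicity
  together with \<open>\<delta>(\<delta>(Y)) = \<delta>(Y)\<close> upgrades this to \<open>\<delta>(X) \<subseteq> \<delta>(Y)\<close>. Combined with
  \<open>I K \<subseteq> I\<close> this gives (3) and (4); with a single non-nilpotent \<open>a\<close> in place of \<open>K\<close> it gives
  \<open>(I : a) \<subseteq> \<delta>(I)\<close> and hence (1). Part (2) holds because \<open>\<delta>\<close> fixes \<open>\<delta>(I)\<close>.\<close>

lemma expansion_ideal:
  "expansion R \<delta> \<Longrightarrow> ideal I R \<Longrightarrow> ideal (\<delta> I) R"
  unfolding expansion_def by blast

lemma expansion_mono: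
  "expansion R \<delta> \<Longrightarrow> ideal I R \<Longrightarrow> ideal J R \<Longrightarrow> I \<subseteq> J \<Longrightarrow> \<delta> I \<subseteq> \<delta> J"
  unfolding expansion_def by blast

lemma expansion_subset_idempotent:
  assumes "expansion R \<delta>" and "ideal I R" and "ideal J R"
    and "I \<subseteq> \<delta> J" and "\<delta> (\<delta> J) = \<delta> J"
  shows "\<delta> I \<subseteq> \<delta> J"
  using assms expansion_mono[OF assms(1,2) expansion_ideal[OF assms(1,3)]] by simp

lemma delta_n_ideal_imp_ideal: "delta_n_ideal R \<delta> I \<Longrightarrow> ideal I R"
  unfolding delta_n_ideal_def by blast

lemma n_ideal_iff_delta_n_ideal_of_fixed:
  "\<delta> J = J \<Longrightarrow> n_ideal R J \<longleftrightarrow> delta_n_ideal R \<delta> J"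
  unfolding n_ideal_def delta_n_ideal_def by simp

lemma (in cring) colon_ideal:
  assumes I: "ideal I R" and a: "a \<in> carrier R"
  shows "ideal (colon R I a) R"
proof -
  interpret ideal I R by (rule I)
  show ?thesis
  proof (rule idealI)
    show "ring R" by (rule ring_axioms)
    show "subgroup (colon R I a) (add_monoid R)"
    proof (rule add.subgroupI)
      show "colon R I a \<subseteq> carrier R" by (auto simp: colon_def)
      show "colon R I a \<noteq> {}" using a by (auto simp: colon_def intro!: exI[of _ \<zero>])
    next
      fix g h assume "g \<in> colon R I a" and "h \<in> colon R I a"
      then have g: "g \<in> carrier R" "g \<otimes> a \<in> I" and h: "h \<in> carrier R" "h \<otimes> a \<in> I"
        by (auto simp: colon_def)
      have "(\<ominus> g) \<otimes> a = \<ominus> (g \<otimes> a)" using g a by (simp add: l_minus)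
      then show "\<ominus> g \<in> colon R I a" using g by (simp add: colon_def a_inv_closed)
      have "(g \<oplus> h) \<otimes> a = g \<otimes> a \<oplus> h \<otimes> a" using g h a by (simp add: l_distr)
      then show "g \<oplus> h \<in> colon R I a" using g h by (simp add: colon_def a_closed)
    qed
  next
    fix r x assume "r \<in> colon R I a" and x: "x \<in> carrier R"
    then have r: "r \<in> carrier R" "r \<otimes> a \<in> I" by (auto simp: colon_def)
    have "x \<otimes> r \<otimes> a = x \<otimes> (r \<otimes> a)" and "r \<otimes> x \<otimes> a = x \<otimes> (r \<otimes> a)"
      using r x a by (simp_all add: m_assoc m_lcomm)
    then show "x \<otimes> r \<in> colon R I a" and "r \<otimes> x \<in> colon R I a"
      using r x I_l_closed by (auto simp: colon_def)
  qed
qed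

lemma (in cring) ideal_subset_colon:
  "ideal I R \<Longrightarrow> a \<in> carrier R \<Longrightarrow> I \<subseteq> colon R I a"
  by (auto simp: colon_def ideal.I_r_closed ideal.Icarr)

lemma (in cring) colon_subset_delta:
  assumes "delta_n_ideal R \<delta> I" and "a \<in> carrier R" and "a \<notin> nilrad R"
  shows "colon R I a \<subseteq> \<delta> I"
proof
  fix r assume "r \<in> colon R I a"
  then have "r \<in> carrier R" and "a \<otimes> r \<in> I"
    using assms(2) by (auto simp: colon_def m_comm)
  then show "r \<in> \<delta> I" using assms unfolding delta_n_ideal_def by blast
qed

lemma (in cring) delta_colon_eq:
  assumes "expansion R \<delta>" and "delta_n_ideal R \<delta> I" and "\<delta> (\<delta> I) = \<delta> I"
    and "a \<in> carrier R" and "a \<notin> nilrad R"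
  shows "\<delta> (colon R I a) = \<delta> I"
proof
  have I: "ideal I R" by (rule delta_n_ideal_imp_ideal[OF assms(2)])
  have colon: "ideal (colon R I a) R" by (rule colon_ideal[OF I assms(4)])
  show "\<delta> (colon R I a) \<subseteq> \<delta> I"
    using expansion_subset_idempotent[OF assms(1) colon I] colon_subset_delta assms by blast
  show "\<delta> I \<subseteq> \<delta> (colon R I a)"
    using expansion_mono[OF assms(1) I colon] ideal_subset_colon[OF I assms(4)] by blast
qed

lemma (in cring) subset_delta_of_ideal_prod_subset:
  assumes X: "ideal X R" and K: "ideal K R" and "X \<cdot> K \<subseteq> Y"
    and Y: "delta_n_ideal R \<delta> Y" and k: "k \<in> K" "k \<notin> nilrad R"
  shows "X \<subseteq> \<delta> Y"
proof
  fix x assume x: "x \<in> X"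
  have kc: "k \<in> carrier R" and xc: "x \<in> carrier R"
    using ideal.Icarr[OF K k(1)] ideal.Icarr[OF X x] .
  have "x \<otimes> k \<in> X \<cdot> K" by (rule ideal_prod.prod[OF x k(1)])
  then have "k \<otimes> x \<in> Y" using \<open>X \<cdot> K \<subseteq> Y\<close> m_comm[OF xc kc] by auto
  then show "x \<in> \<delta> Y" using Y k(2) kc xc unfolding delta_n_ideal_def by blast
qed

lemma (in cring) delta_subset_of_ideal_prod_subset:
  assumes "expansion R \<delta>" and X: "ideal X R" and K: "ideal K R" and "X \<cdot> K \<subseteq> Y"
    and Y: "delta_n_ideal R \<delta> Y" and "\<delta> (\<delta> Y) = \<delta> Y"
    and "K \<inter> (carrier R - nilrad R) \<noteq> {}"
  shows "\<delta> X \<subseteq> \<delta> Y"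
proof -
  obtain k where "k \<in> K" "k \<notin> nilrad R" using assms(7) by blast
  then have "X \<subseteq> \<delta> Y" using subset_delta_of_ideal_prod_subset assms by blast
  then show ?thesis
    using expansion_subset_idempotent[OF assms(1) X delta_n_ideal_imp_ideal[OF Y]] assms(6) by blast
qed

lemma (in cring) delta_eq_of_ideal_prod_eq:
  assumes "expansion R \<delta>" and K: "ideal K R" and "I \<cdot> K = J \<cdot> K"
    and I: "delta_n_ideal R \<delta> I" and "\<delta> (\<delta> I) = \<delta> I"
    and J: "delta_n_ideal R \<delta> J" and "\<delta> (\<delta> J) = \<delta> J"
    and "K \<inter> (carrier R - nilrad R) \<noteq> {}"
  shows "\<delta> I = \<delta> J"
proof -
  have "ideal I R" and "ideal J R"
    using I J by (simp_all add: delta_n_ideal_imp_ideal)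
  then have "I \<cdot> K \<subseteq> I" and "J \<cdot> K \<subseteq> J"
    using K ideal_prod_inter by blast+
  then show ?thesis
    using delta_subset_of_ideal_prod_subset[OF assms(1) \<open>ideal J R\<close> K _ I]
      delta_subset_of_ideal_prod_subset[OF assms(1) \<open>ideal I R\<close> K _ J] assms(3,5,7,8)
    by (metis subset_antisym)
qed

lemma (in cring) delta_ideal_prod_eq:
  assumes "expansion R \<delta>" and K: "ideal K R"
    and IK: "delta_n_ideal R \<delta> (I \<cdot> K)" and "\<delta> (\<delta> (I \<cdot> K)) = \<delta> (I \<cdot> K)"
    and I: "ideal I R" and "K \<inter> (carrier R - nilrad R) \<noteq> {}"
  shows "\<delta> (I \<cdot> K) = \<delta> I"
proof
  show "\<delta> (I \<cdot> K) \<subseteq> \<delta> I"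
    using expansion_mono[OF assms(1) ideal_prod_is_ideal[OF I K] I] ideal_prod_inter[OF I K] by blast
  show "\<delta> I \<subseteq> \<delta> (I \<cdot> K)"
    using delta_subset_of_ideal_prod_subset[OF assms(1) I K subset_refl IK] assms(4,6) .
qed

theorem proposition2p14:
  fixes R (structure) and \<delta> :: "'a set \<Rightarrow> 'a set" and I :: "'a set"
  assumes "cring R" and "\<one>\<^bsub>R\<^esub> \<noteq> \<zero>\<^bsub>R\<^esub>"
    and "expansion R \<delta>"
    and "ideal I R" and "I \<noteq> carrier R"
    and "\<delta> (\<delta> I) = \<delta> I"
  shows
    "(\<forall>a \<in> carrier R. delta_n_ideal R \<delta> I \<longrightarrow> a \<notin> nilrad R \<longrightarrow>
        \<delta> (colon R I a) = \<delta> I)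
   \<and> (n_ideal R (\<delta> I) \<longleftrightarrow> delta_n_ideal R \<delta> (\<delta> I))
   \<and> (\<forall>J K. ideal J R \<longrightarrow> ideal K R \<longrightarrow> I \<cdot> K = J \<cdot> K \<longrightarrow>
        delta_n_ideal R \<delta> I \<longrightarrow> delta_n_ideal R \<delta> J \<longrightarrow> \<delta> (\<delta> J) = \<delta> J \<longrightarrow>
        K \<inter> (carrier R - nilrad R) \<noteq> {} \<longrightarrow> \<delta> I = \<delta> J)
   \<and> (\<forall>K. ideal K R \<longrightarrow> delta_n_ideal R \<delta> (I \<cdot> K) \<longrightarrow> delta_n_ideal R \<delta> I \<longrightarrow>
        \<delta> (\<delta> (I \<cdot> K)) = \<delta> (I \<cdot> K) \<longrightarrow>
        K \<inter> (carrier R - nilrad R) \<noteq> {} \<longrightarrow> \<delta> (I \<cdot> K) = \<delta> I)"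
proof -
  interpret cring R by (rule assms(1))
  show ?thesis
    using delta_colon_eq[OF assms(3) _ assms(6)]
      n_ideal_iff_delta_n_ideal_of_fixed[of \<delta> "\<delta> I", OF assms(6)]
      delta_eq_of_ideal_prod_eq[OF assms(3) _ _ _ assms(6)]
      delta_ideal_prod_eq[OF assms(3) _ _ _ assms(4)]
    by blast
qed

end
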